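(* Let $A=\mathbb Z[\mathbb R]$ be the integral group ring of the additive group $\mathbb R$, with elements written as finite formal sums $\sum c_\alpha[\alpha]$. Let $d:A\to\mathbb Z$ and $v:A\to\mathbb R$ be the additive homomorphisms with $d([\alpha])=1$, $v([\alpha])=\alpha$, and let $(x,y)\mapsto x\vee y$ be the bi-additive map $A\times A\to A$ with $[\alpha]\vee[\beta]=[\max\{\alpha,\beta\}]$. Let $A^+$ be the set of $\sum_\alpha c_\alpha[\alpha]$ with $c_\alpha=0$ for $\alpha<0$ and $c_\alpha\ge0$ for all $\alpha$. Then for all $\sigma,\tau\in A^+$, $$v(\sigma\vee\tau)\le d(\tau)v(\sigma)+d(\sigma)v(\tau)-\min\{v(\sigma),v(\tau)\}.$$ *)

theory Defs
  imports Complex_Main "HOL-Library.Poly_Mapping"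
begin

(* The integral group ring Z[R]: finitely supported maps real => int; [a] is Poly_Mapping.single a 1. *)

type_synonym grR = "real \<Rightarrow>\<^sub>0 int"

definition gr_d :: "grR \<Rightarrow> int" where
  "gr_d x = (\<Sum>a\<in>Poly_Mapping.keys x. Poly_Mapping.lookup x a)"

definition gr_v :: "grR \<Rightarrow> real" where
  "gr_v x = (\<Sum>a\<in>Poly_Mapping.keys x. of_int (Poly_Mapping.lookup x a) * a)"

definition gr_join :: "grR \<Rightarrow> grR \<Rightarrow> grR" where
  "gr_join x y = (\<Sum>(a,b)\<in>Poly_Mapping.keys x \<times> Poly_Mapping.keys y.
      Poly_Mapping.single (max a b) (Poly_Mapping.lookup x a * Poly_Mapping.lookup y b))"

definition gr_pos :: "grR set" where
  "gr_pos = {x. (\<forall>a. a < 0 \<longrightarrow> Poly_Mapping.lookup x a = 0) \<and> (\<forall>a. Poly_Mapping.lookup x a \<ge> 0)}"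

end

theory Submission
  imports Defs
begin

text \<open>
  Write \<open>\<sigma> = \<Sum> s\<^sub>a [a]\<close> and \<open>\<tau> = \<Sum> t\<^sub>b [b]\<close>. Since \<open>max a b = a + b - min a b\<close>,
  \<open>v(\<sigma> \<or> \<tau>) = d(\<tau>) v(\<sigma>) + d(\<sigma>) v(\<tau>) - \<Sum>\<^sub>a\<^sub>,\<^sub>b s\<^sub>a t\<^sub>b min a b\<close>, so it suffices to bound
  the last sum below by \<open>min (v \<sigma>) (v \<tau>)\<close>. All terms are nonnegative; if, say, the largest
  point \<open>b\<^sub>0\<close> of \<tau> dominates every point of \<sigma>, the terms with \<open>b = b\<^sub>0\<close> alone contribute
  \<open>t\<^sub>b\<^sub>0 v(\<sigma>) \<ge> v(\<sigma>)\<close>, because coefficients are positive integers.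
\<close>

lemma gr_v_superset:
  assumes "finite S" "Poly_Mapping.keys x \<subseteq> S"
  shows "gr_v x = (\<Sum>a\<in>S. of_int (Poly_Mapping.lookup x a) * a)"
  unfolding gr_v_def
  by (rule sum.mono_neutral_left) (use assms in \<open>auto simp: in_keys_iff\<close>)

lemma gr_v_add: "gr_v (x + y) = gr_v x + gr_v y"
proof -
  let ?S = "Poly_Mapping.keys x \<union> Poly_Mapping.keys y"
  have S: "finite ?S" by simp
  have "gr_v (x + y) = (\<Sum>a\<in>?S. of_int (Poly_Mapping.lookup (x + y) a) * a)"
    by (rule gr_v_superset[OF S]) (simp add: keys_add)
  also have "\<dots> = (\<Sum>a\<in>?S. of_int (Poly_Mapping.lookup x a) * a)
      + (\<Sum>a\<in>?S. of_int (Poly_Mapping.lookup y a) * a)"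
    by (simp add: lookup_add distrib_right sum.distrib)
  also have "\<dots> = gr_v x + gr_v y"
    by (simp add: gr_v_superset[OF S])
  finally show ?thesis .
qed

lemma gr_v_sum: "gr_v (sum f A) = (\<Sum>i\<in>A. gr_v (f i))"
proof (induction A rule: infinite_finite_induct)
  case (insert i A)
  then show ?case by (simp add: gr_v_add)
qed (simp_all add: gr_v_def)

lemma gr_v_single: "gr_v (Poly_Mapping.single a c) = of_int c * a"
  by (simp add: gr_v_def)

lemma gr_v_gr_join:
  "gr_v (gr_join x y) = (\<Sum>a\<in>Poly_Mapping.keys x. \<Sum>b\<in>Poly_Mapping.keys y.
     of_int (Poly_Mapping.lookup x a) * of_int (Poly_Mapping.lookup y b) * max a b)"
  unfolding gr_join_def gr_v_sum
  by (simp add: gr_v_single sum.cartesian_product case_prod_beta)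

lemma gr_pos_keys:
  assumes "x \<in> gr_pos" "a \<in> Poly_Mapping.keys x"
  shows "0 \<le> a" and "1 \<le> Poly_Mapping.lookup x a"
proof -
  have "Poly_Mapping.lookup x a \<noteq> 0" "0 \<le> Poly_Mapping.lookup x a"
    using assms by (auto simp: gr_pos_def in_keys_iff)
  then show "1 \<le> Poly_Mapping.lookup x a" by linarith
  show "0 \<le> a"
    using assms by (auto simp: gr_pos_def in_keys_iff not_less[symmetric])
qed

lemma double_sum_max_eq:
  fixes s t :: "real \<Rightarrow> real"
  shows "(\<Sum>a\<in>A. \<Sum>b\<in>B. s a * t b * max a b) =
    sum t B * (\<Sum>a\<in>A. s a * a) + sum s A * (\<Sum>b\<in>B. t b * b)
    - (\<Sum>a\<in>A. \<Sum>b\<in>B. s a * t b * min a b)"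
proof -
  have "max a b = a + b - min a b" for a b :: real
    by (simp add: max_def min_def)
  then have "(\<Sum>a\<in>A. \<Sum>b\<in>B. s a * t b * max a b) =
      (\<Sum>a\<in>A. \<Sum>b\<in>B. s a * t b * (a + b)) - (\<Sum>a\<in>A. \<Sum>b\<in>B. s a * t b * min a b)"
    by (simp add: sum_subtractf[symmetric] right_diff_distrib[symmetric] del: max_def min_def)
  also have "(\<Sum>a\<in>A. \<Sum>b\<in>B. s a * t b * (a + b)) =
      sum t B * (\<Sum>a\<in>A. s a * a) + sum s A * (\<Sum>b\<in>B. t b * b)"
    by (simp add: sum_distrib_left sum_distrib_right sum.distrib algebra_simps sum.swap[of _ B A])
  finally show ?thesis .
qed

lemma sum_le_double_sum_min_of_dominating:
  fixes s t :: "real \<Rightarrow> real"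
  assumes "finite B" "b\<^sub>0 \<in> B" "1 \<le> t b\<^sub>0" "\<And>a. a \<in> A \<Longrightarrow> a \<le> b\<^sub>0"
    and nonneg: "\<And>a b. a \<in> A \<Longrightarrow> b \<in> B \<Longrightarrow> 0 \<le> s a * t b * min a b"
    and "\<And>a. a \<in> A \<Longrightarrow> 0 \<le> s a * a"
  shows "(\<Sum>a\<in>A. s a * a) \<le> (\<Sum>a\<in>A. \<Sum>b\<in>B. s a * t b * min a b)"
proof (rule sum_mono)
  fix a assume a: "a \<in> A"
  have "s a * a \<le> s a * a * t b\<^sub>0"
    using assms(3) assms(6)[OF a] by (simp add: mult_le_cancel_left1)
  also have "\<dots> = s a * t b\<^sub>0 * min a b\<^sub>0"
    using assms(4)[OF a] by (simp add: min_absorb1 mult_ac)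
  also have "\<dots> \<le> (\<Sum>b\<in>B. s a * t b * min a b)"
    using member_le_sum[OF assms(2), of "\<lambda>b. s a * t b * min a b"] nonneg[OF a] assms(1)
    by simp
  finally show "s a * a \<le> (\<Sum>b\<in>B. s a * t b * min a b)" .
qed

lemma min_sum_le_double_sum_min:
  fixes s t :: "real \<Rightarrow> real"
  assumes "finite A" "finite B"
    and A: "\<And>a. a \<in> A \<Longrightarrow> 0 \<le> a \<and> 1 \<le> s a"
    and B: "\<And>b. b \<in> B \<Longrightarrow> 0 \<le> b \<and> 1 \<le> t b"
  shows "min (\<Sum>a\<in>A. s a * a) (\<Sum>b\<in>B. t b * b) \<le> (\<Sum>a\<in>A. \<Sum>b\<in>B. s a * t b * min a b)"
proof -
  have nonneg: "0 \<le> s a * t b * min a b" "0 \<le> t b * s a * min b a"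
    if "a \<in> A" "b \<in> B" for a b
    using A[OF that(1)] B[OF that(2)] by simp_all
  have A_nonneg: "0 \<le> s a * a" if "a \<in> A" for a
    using A[OF that] by simp
  have B_nonneg: "0 \<le> t b * b" if "b \<in> B" for b
    using B[OF that] by simp
  consider "A = {}" | "B = {}" | "A \<noteq> {}" "B \<noteq> {}" "Max A \<le> Max B"
    | "A \<noteq> {}" "B \<noteq> {}" "Max B \<le> Max A"
    by linarith
  then show ?thesis
  proof cases
    case 1
    then show ?thesis
      using B by (simp add: min_def sum_nonneg)
  next
    case 2
    then show ?thesis
      using A by (simp add: min_def sum_nonneg)
  next
    case 3
    have "(\<Sum>a\<in>A. s a * a) \<le> (\<Sum>a\<in>A. \<Sum>b\<in>B. s a * t b * min a b)"
      using 3 assms nonneg A_nonneg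
      by (intro sum_le_double_sum_min_of_dominating[where b\<^sub>0 = "Max B"])
        (auto intro: order_trans[OF Max_ge])
    then show ?thesis by linarith
  next
    case 4
    have "(\<Sum>b\<in>B. t b * b) \<le> (\<Sum>b\<in>B. \<Sum>a\<in>A. t b * s a * min b a)"
      using 4 assms nonneg B_nonneg
      by (intro sum_le_double_sum_min_of_dominating[where b\<^sub>0 = "Max A"])
        (auto intro: order_trans[OF Max_ge])
    also have "\<dots> = (\<Sum>a\<in>A. \<Sum>b\<in>B. s a * t b * min a b)"
      by (subst sum.swap) (simp add: min.commute mult.commute)
    finally show ?thesis by linarith
  qed
qed

theorem proposition5p1:
  fixes \<sigma> \<tau> :: grR
  assumes "\<sigma> \<in> gr_pos" and "\<tau> \<in> gr_pos"
  shows "gr_v (gr_join \<sigma> \<tau>) \<le>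
    of_int (gr_d \<tau>) * gr_v \<sigma> + of_int (gr_d \<sigma>) * gr_v \<tau> - min (gr_v \<sigma>) (gr_v \<tau>)"
proof -
  define s where "s a = real_of_int (Poly_Mapping.lookup \<sigma> a)" for a
  define t where "t b = real_of_int (Poly_Mapping.lookup \<tau> b)" for b
  have "min (gr_v \<sigma>) (gr_v \<tau>) \<le> (\<Sum>a\<in>Poly_Mapping.keys \<sigma>. \<Sum>b\<in>Poly_Mapping.keys \<tau>.
      s a * t b * min a b)"
    unfolding gr_v_def s_def t_def
    using gr_pos_keys[OF assms(1)] gr_pos_keys[OF assms(2)]
    by (intro min_sum_le_double_sum_min) auto
  moreover have "gr_v (gr_join \<sigma> \<tau>) = of_int (gr_d \<tau>) * gr_v \<sigma> + of_int (gr_d \<sigma>) * gr_v \<tau>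
      - (\<Sum>a\<in>Poly_Mapping.keys \<sigma>. \<Sum>b\<in>Poly_Mapping.keys \<tau>. s a * t b * min a b)"
    unfolding gr_v_gr_join double_sum_max_eq
    by (simp add: gr_v_def[of \<sigma>] gr_v_def[of \<tau>] gr_d_def s_def t_def)
  ultimately show ?thesis by linarith
qed

end
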